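(* Fix $\tau>0$. For $n\ge1$ let $W_n$ be an $n\times n$ matrix of independent $\mathcal N(0,1)$ entries, and for $1\le k\le n$ let $\Gamma_k(\tau,n)$ be the number of $k\times k$ submatrices $U$ of $W_n$ (row set and column set arbitrary $k$-subsets of $\{1,\dots,n\}$) whose entry average $F(U)$ satisfies $F(U)\ge\tau$. There exist integers $n_0,k_0\ge1$ and a constant $C>0$, depending on $\tau$ but not on $k$ or $n$, such that for all $n\ge n_0$ and all $k\ge k_0$ with $k\le n$, \[ \frac{\operatorname{Var}\Gamma_k(\tau,n)}{(E\,\Gamma_k(\tau,n))^2}\le C\,k^4\sum_{l=1}^k\sum_{r=1}^k\frac{\binom{k}{l}\binom{n-k}{k-l}}{\binom{n}{k}}\,\frac{\binom{k}{r}\binom{n-k}{k-r}}{\binom{n}{k}}\exp\!\left\{\frac{rl\tau^2}{2}\left(1+\frac{k^2-rl}{k^2+rl}\right)\right\}. \]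
   Context: Binomial coefficients $\binom{a}{b}$ with $b>a$ are taken to be $0$. *)

theory Defs
  imports "HOL-Probability.Probability"
begin

definition gauss_matrix :: "nat \<Rightarrow> (nat \<times> nat \<Rightarrow> real) measure" where
  "gauss_matrix n = PiM ({..<n} \<times> {..<n}) (\<lambda>_. density lborel std_normal_density)"

definition avg_sub :: "(nat \<times> nat \<Rightarrow> real) \<Rightarrow> nat set \<Rightarrow> nat set \<Rightarrow> real" where
  "avg_sub w R C = (\<Sum>i\<in>R. \<Sum>j\<in>C. w (i, j)) / (real (card R) * real (card C))"

definition Gamma_count :: "real \<Rightarrow> nat \<Rightarrow> nat \<Rightarrow> (nat \<times> nat \<Rightarrow> real) \<Rightarrow> real" where
  "Gamma_count \<tau> n k w = real (card {(R, C). R \<subseteq> {..<n} \<and> card R = k \<and> C \<subseteq> {..<n} \<and> card C = k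
                                         \<and> avg_sub w R C \<ge> \<tau>})"

definition expect_Gamma :: "real \<Rightarrow> nat \<Rightarrow> nat \<Rightarrow> real" where
  "expect_Gamma \<tau> n k = integral\<^sup>L (gauss_matrix n) (Gamma_count \<tau> n k)"

definition var_Gamma :: "real \<Rightarrow> nat \<Rightarrow> nat \<Rightarrow> real" where
  "var_Gamma \<tau> n k = integral\<^sup>L (gauss_matrix n) (\<lambda>w. (Gamma_count \<tau> n k w - expect_Gamma \<tau> n k)\<^sup>2)"

end

theory Submission
  imports Defs
begin

text \<open>Let S be the entry sum of a k x k block, so that F >= tau means S >= tau k^2 and S/k is
  standard normal; hence E Gamma = B^2 q with B = (n choose k) and q = P(N >= tau k), while
  Var Gamma is the sum over pairs of blocks of P(A and A') - q^2. Blocks sharing no row or no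
  column are independent and contribute nothing. If they share l rows and r columns, then
  A and A' force S + S' >= 2 tau k^2, where S + S' is centred normal with variance 2k^2 + 2lr.
  The tail bounds exp(-x^2/2) from above and exp(-3/2) exp(-x^2/2) / (sqrt(2 pi) x) from below
  (valid for x = tau k >= 1) turn P(A and A') / q^2 into the exponential of the theorem with
  C = 2 pi e^3 tau^2, and at most B^2 times the two hypergeometric counts of pairs of blocks
  have overlap (l, r).\<close>

abbreviation std_normal :: "real measure" where
  "std_normal \<equiv> density lborel std_normal_density"

lemma prob_space_std_normal: "prob_space std_normal"
  using prob_space_normal_density[of 1 0] by simp

lemma std_normal_tail_le:
  assumes x: "x \<ge> 0"
  shows "measure std_normal {x..} \<le> exp (-x\<^sup>2/2)"
proof -
  have pointwise: "ennreal (std_normal_density t) * indicator {x..} t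
      \<le> ennreal (exp (-x\<^sup>2/2)) * ennreal (normal_density x 1 t)" for t
  proof (cases "t \<ge> x")
    case True
    have "x * x \<le> t * x" using True x by (simp add: mult_right_mono)
    then have "- t\<^sup>2/2 \<le> -x\<^sup>2/2 + (-(t-x)\<^sup>2/2)"
      by (simp add: power2_eq_square algebra_simps)
    then have "exp (- t\<^sup>2/2) \<le> exp (-x\<^sup>2/2) * exp (-(t-x)\<^sup>2/2)"
      by (simp only: exp_add[symmetric] exp_le_cancel_iff)
    then have "std_normal_density t \<le> exp (-x\<^sup>2/2) * normal_density x 1 t"
      by (simp add: normal_density_def divide_right_mono)
    then show ?thesis using True by (simp add: ennreal_mult'[symmetric] indicator_def)
  qed (simp add: indicator_def)
  have "emeasure std_normal {x..} = (\<integral>\<^sup>+t. ennreal (std_normal_density t) * indicator {x..} t \<partial>lborel)"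
    by (simp add: emeasure_density)
  also have "\<dots> \<le> (\<integral>\<^sup>+t. ennreal (exp (-x\<^sup>2/2)) * ennreal (normal_density x 1 t) \<partial>lborel)"
    by (rule nn_integral_mono) (rule pointwise)
  also have "\<dots> = ennreal (exp (-x\<^sup>2/2)) * (\<integral>\<^sup>+t. ennreal (normal_density x 1 t) \<partial>lborel)"
    by (simp add: nn_integral_cmult)
  also have "(\<integral>\<^sup>+t. ennreal (normal_density x 1 t) \<partial>lborel) = 1"
    by (subst nn_integral_eq_integral) auto
  finally have "emeasure std_normal {x..} \<le> ennreal (exp (-x\<^sup>2/2))" by simp
  then show ?thesis
    by (simp add: measure_def enn2real_leI)
qed

text \<open>The density is at least its value at \<open>x + 1/x\<close> on the interval \<open>[x, x + 1/x]\<close>.\<close>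

lemma std_normal_tail_ge:
  assumes x: "x \<ge> 1"
  shows "measure std_normal {x..} \<ge> exp (-3/2) / (sqrt (2*pi) * x) * exp (-x\<^sup>2/2)"
proof -
  let ?b = "x + 1/x"
  have xpos: "x > 0" using x by simp
  have pointwise: "ennreal (std_normal_density ?b) * indicator {x..?b} t
      \<le> ennreal (std_normal_density t) * indicator {x..} t" for t
  proof (cases "x \<le> t \<and> t \<le> ?b")
    case True
    have "t\<^sup>2 \<le> ?b\<^sup>2" using True xpos by (intro power_mono) auto
    then have "std_normal_density ?b \<le> std_normal_density t"
      unfolding std_normal_density_def by (intro mult_left_mono) auto
    then show ?thesis using True by (simp add: indicator_def)
  qed (auto simp add: indicator_def)
  have "ennreal (std_normal_density ?b) * ennreal (1/x)
      = (\<integral>\<^sup>+t. ennreal (std_normal_density ?b) * indicator {x..?b} t \<partial>lborel)"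
    using xpos by (simp add: nn_integral_cmult)
  also have "\<dots> \<le> (\<integral>\<^sup>+t. ennreal (std_normal_density t) * indicator {x..} t \<partial>lborel)"
    by (rule nn_integral_mono) (rule pointwise)
  also have "\<dots> = emeasure std_normal {x..}"
    by (simp add: emeasure_density)
  finally have "ennreal (std_normal_density ?b * (1/x)) \<le> emeasure std_normal {x..}"
    using xpos by (simp add: ennreal_mult'[symmetric])
  moreover have "emeasure std_normal {x..} \<noteq> \<infinity>"
    using prob_space.emeasure_le_1[OF prob_space_std_normal, of "{x..}"] by (auto simp: top_unique)
  ultimately have lower: "std_normal_density ?b * (1/x) \<le> measure std_normal {x..}"
    using enn2real_mono xpos by (fastforce simp add: measure_def less_top)
  have "?b\<^sup>2 = x\<^sup>2 + 2 + 1/x\<^sup>2" using xpos by (simp add: power2_eq_square field_simps)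
  moreover have "1/x\<^sup>2 \<le> 1" using x by (simp add: power_le_one_iff)
  ultimately have "-x\<^sup>2/2 - 3/2 \<le> - ?b\<^sup>2/2" by simp
  then have "exp (-3/2) * exp (-x\<^sup>2/2) \<le> exp (- ?b\<^sup>2/2)"
    by (simp add: mult_exp_exp)
  then have "exp (-3/2) / (sqrt (2*pi) * x) * exp (-x\<^sup>2/2) \<le> std_normal_density ?b * (1/x)"
    using xpos by (simp add: std_normal_density_def field_simps)
  with lower show ?thesis by linarith
qed

lemma std_normal_tail_ratio_le:
  assumes x: "x \<ge> 1" and s: "s \<ge> 0"
  shows "measure std_normal {s..} / (measure std_normal {x..})\<^sup>2 \<le> 2 * pi * exp 3 * x\<^sup>2 * exp (x\<^sup>2 - s\<^sup>2/2)"
proof -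
  define L where "L = exp (-3/2) / (sqrt (2*pi) * x) * exp (-x\<^sup>2/2)"
  have L_pos: "L > 0" unfolding L_def using x by simp
  have "(measure std_normal {x..})\<^sup>2 \<ge> L\<^sup>2"
    using std_normal_tail_ge[OF x] L_pos unfolding L_def[symmetric] by (intro power_mono) auto
  then have "measure std_normal {s..} / (measure std_normal {x..})\<^sup>2 \<le> exp (-s\<^sup>2/2) / L\<^sup>2"
    using std_normal_tail_le[OF s] L_pos by (intro frac_le) auto
  also have "L\<^sup>2 = exp (-3) * exp (-x\<^sup>2) / (2 * pi * x\<^sup>2)"
    unfolding L_def using x
    by (simp add: power_divide power_mult_distrib power2_eq_square exp_add[symmetric])
  also have "exp (-s\<^sup>2/2) / (exp (-3) * exp (-x\<^sup>2) / (2 * pi * x\<^sup>2))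
      = 2 * pi * x\<^sup>2 * (exp (-s\<^sup>2/2) / (exp (-3) * exp (-x\<^sup>2)))"
    by simp
  also have "exp (-s\<^sup>2/2) / (exp (-3) * exp (-x\<^sup>2)) = exp 3 * exp (x\<^sup>2 - s\<^sup>2/2)"
  proof -
    have "exp 3 * exp (x\<^sup>2 - s\<^sup>2/2) * (exp (-3) * exp (-x\<^sup>2)) = exp (-s\<^sup>2/2)"
      by (simp only: exp_add[symmetric]) simp
    then show ?thesis by (simp add: divide_eq_eq)
  qed
  finally show ?thesis by (simp add: mult_ac)
qed

lemma overlap_exponent_eq:
  fixes \<tau> :: real and k l r :: nat
  assumes k: "k > 0"
  shows "(\<tau> * real k)\<^sup>2 - (2 * (\<tau> * real k ^ 2) / sqrt (2 * real k ^ 2 + 2 * real l * real r))\<^sup>2 / 2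
    = real r * real l * \<tau>\<^sup>2 / 2 * (1 + (real k ^ 2 - real r * real l) / (real k ^ 2 + real r * real l))"
proof -
  define D where "D = real k ^ 2 + real r * real l"
  have D: "D > 0" unfolding D_def using k by (simp add: add_pos_nonneg)
  have "2 * real k ^ 2 + 2 * real l * real r = 2 * D" by (simp add: D_def algebra_simps)
  then have "(2 * (\<tau> * real k ^ 2) / sqrt (2 * real k ^ 2 + 2 * real l * real r))\<^sup>2 / 2
      = \<tau>\<^sup>2 * real k ^ 4 / D"
    using D by (simp add: power_divide power_mult_distrib)
  moreover have "(\<tau> * real k)\<^sup>2 - \<tau>\<^sup>2 * real k ^ 4 / D = \<tau>\<^sup>2 * (real k)\<^sup>2 * (real r * real l) / D"
    using D by (simp add: D_def field_simps power2_eq_square power4_eq_xxxx)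
  moreover have "real r * real l * \<tau>\<^sup>2 / 2 * (1 + (real k ^ 2 - real r * real l) / D)
      = \<tau>\<^sup>2 * (real k)\<^sup>2 * (real r * real l) / D"
    using D by (simp add: D_def field_simps)
  ultimately show ?thesis unfolding D_def[symmetric] by linarith
qed

lemma overlap_tail_ratio_le:
  fixes \<tau> :: real and k l r :: nat
  assumes \<tau>: "\<tau> > 0" and \<tau>k: "\<tau> * real k \<ge> 1"
  shows "measure std_normal {2 * (\<tau> * real k ^ 2) / sqrt (2 * real k ^ 2 + 2 * real l * real r)..}
      / (measure std_normal {\<tau> * real k..})\<^sup>2
    \<le> 2 * pi * exp 3 * \<tau>\<^sup>2 * real k ^ 4 * exp (real r * real l * \<tau>\<^sup>2 / 2 *
        (1 + (real k ^ 2 - real r * real l) / (real k ^ 2 + real r * real l)))"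
    (is "?ratio \<le> _ * exp ?exponent")
proof -
  have k: "k > 0" using \<tau>k by (cases k) auto
  have "2 * (\<tau> * real k ^ 2) / sqrt (2 * real k ^ 2 + 2 * real l * real r) \<ge> 0"
    using \<tau> by simp
  from std_normal_tail_ratio_le[OF \<tau>k this]
  have "?ratio \<le> 2 * pi * exp 3 * (\<tau> * real k)\<^sup>2 * exp ?exponent"
    unfolding overlap_exponent_eq[OF k] .
  also have "\<dots> \<le> 2 * pi * exp 3 * (\<tau>\<^sup>2 * real k ^ 4) * exp ?exponent"
  proof -
    have "real k ^ 2 \<le> real k ^ 4" using k by (intro power_increasing) auto
    then have "(\<tau> * real k)\<^sup>2 \<le> \<tau>\<^sup>2 * real k ^ 4"
      by (simp add: power_mult_distrib mult_left_mono)
    then show ?thesis by (intro mult_right_mono mult_left_mono) auto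
  qed
  finally show ?thesis by (simp add: mult_ac)
qed

lemma (in prob_space) variance_sum_indicators:
  assumes P: "finite P" and A: "\<And>p. p \<in> P \<Longrightarrow> A p \<in> events"
    and q: "\<And>p. p \<in> P \<Longrightarrow> prob (A p) = q"
  shows "(\<integral>w. ((\<Sum>p\<in>P. indicator (A p) w) - real (card P) * q)\<^sup>2 \<partial>M) =
     (\<Sum>p\<in>P. \<Sum>p'\<in>P. prob (A p \<inter> A p') - q\<^sup>2)"
proof -
  have product: "(indicator (A p) w - q) * (indicator (A p') w - q)
      = indicator (A p \<inter> A p') w - q * indicator (A p) w - q * indicator (A p') w + q\<^sup>2" for p p' w
    by (auto simp: indicator_def power2_eq_square algebra_simps)
  have square: "((\<Sum>p\<in>P. indicator (A p) w) - real (card P) * q)\<^sup>2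
      = (\<Sum>p\<in>P. \<Sum>p'\<in>P. (indicator (A p) w - q) * (indicator (A p') w - q))" for w
  proof -
    have "(\<Sum>p\<in>P. indicator (A p) w) - real (card P) * q = (\<Sum>p\<in>P. indicator (A p) w - q)"
      by (simp add: sum_subtractf)
    then show ?thesis by (simp add: power2_eq_square sum_product)
  qed
  have covariance: "(\<integral>w. (indicator (A p) w - q) * (indicator (A p') w - q) \<partial>M) = prob (A p \<inter> A p') - q\<^sup>2"
    and integrable: "integrable M (\<lambda>w. (indicator (A p) w - q) * (indicator (A p') w - q))"
    if "p \<in> P" "p' \<in> P" for p p'
    using A[OF that(1)] A[OF that(2)] q[OF that(1)] q[OF that(2)] sets.Int[OF A[OF that(1)] A[OF that(2)]]
    unfolding product
    by (auto simp: less_top[symmetric] power2_eq_square Int_absorb2 sets.sets_into_space prob_space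
        intro!: Bochner_Integration.integrable_add Bochner_Integration.integrable_diff
          integrable_mult_right integrable_real_indicator)
  show ?thesis
    by (simp add: square integral_sum integrable_sum integrable covariance)
qed

definition k_subsets :: "nat \<Rightarrow> nat \<Rightarrow> nat set set" where
  "k_subsets n k = {R. R \<subseteq> {..<n} \<and> card R = k}"

lemma k_subsetsD:
  "R \<in> k_subsets n k \<Longrightarrow> R \<subseteq> {..<n} \<and> card R = k \<and> finite R"
  by (auto simp: k_subsets_def intro: finite_subset)

lemma finite_k_subsets: "finite (k_subsets n k)"
  unfolding k_subsets_def by (rule finite_subset[of _ "Pow {..<n}"]) auto

lemma card_k_subsets: "card (k_subsets n k) = n choose k"
  unfolding k_subsets_def using n_subsets[of "{..<n}" k] by simp

text \<open>A \<open>k\<close>-subset meeting \<open>R\<close> in \<open>l\<close> points is determined by its trace on \<open>R\<close> and its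
  part outside \<open>R\<close>.\<close>

lemma card_k_subsets_meeting_le:
  assumes R: "R \<in> k_subsets n k"
  shows "card {R' \<in> k_subsets n k. card (R \<inter> R') = l} \<le> (k choose l) * ((n - k) choose (k - l))"
proof -
  let ?X = "{X. X \<subseteq> R \<and> card X = l}"
  let ?Y = "{Y. Y \<subseteq> {..<n} - R \<and> card Y = k - l}"
  have R': "R \<subseteq> {..<n}" "card R = k" "finite R" using k_subsetsD[OF R] by auto
  have sub: "{R' \<in> k_subsets n k. card (R \<inter> R') = l} \<subseteq> (\<lambda>(X, Y). X \<union> Y) ` (?X \<times> ?Y)"
  proof
    fix R' assume "R' \<in> {R' \<in> k_subsets n k. card (R \<inter> R') = l}"
    then have R'': "R' \<subseteq> {..<n}" "card R' = k" "finite R'" "card (R \<inter> R') = l"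
      by (auto dest: k_subsetsD)
    then have "card (R' - R) = k - l" by (simp add: card_Diff_subset_Int Int_commute)
    then have "(R \<inter> R', R' - R) \<in> ?X \<times> ?Y" using R'' by auto
    moreover have "R' = (\<lambda>(X, Y). X \<union> Y) (R \<inter> R', R' - R)" by auto
    ultimately show "R' \<in> (\<lambda>(X, Y). X \<union> Y) ` (?X \<times> ?Y)" by blast
  qed
  have fin: "finite (?X \<times> ?Y)"
    using finite_subset[of ?X "Pow R"] finite_subset[of ?Y "Pow {..<n}"] R' by auto
  have "card {R' \<in> k_subsets n k. card (R \<inter> R') = l} \<le> card ((\<lambda>(X, Y). X \<union> Y) ` (?X \<times> ?Y))"
    by (rule card_mono[OF finite_imageI[OF fin] sub])
  also have "\<dots> \<le> card (?X \<times> ?Y)" by (rule card_image_le[OF fin])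
  also have "\<dots> = (k choose l) * ((n - k) choose (k - l))"
    using n_subsets[of R l] n_subsets[of "{..<n} - R" "k - l"] R'
    by (simp add: card_cartesian_product card_Diff_subset)
  finally show ?thesis .
qed

lemma sum_k_subsets_by_intersection_le:
  fixes u :: "nat \<Rightarrow> real"
  assumes u: "\<And>l. u l \<ge> 0" and R: "R \<in> k_subsets n k"
  shows "(\<Sum>R'\<in>k_subsets n k. u (card (R \<inter> R')))
    \<le> (\<Sum>l=0..k. real ((k choose l) * ((n - k) choose (k - l))) * u l)"
proof -
  have "(\<lambda>R'. card (R \<inter> R')) ` k_subsets n k \<subseteq> {0..k}"
    using k_subsetsD[OF R] by (auto simp: card_mono)
  then have "(\<Sum>R'\<in>k_subsets n k. u (card (R \<inter> R')))
      = (\<Sum>l=0..k. \<Sum>R'\<in>{R' \<in> k_subsets n k. card (R \<inter> R') = l}. u (card (R \<inter> R')))"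
    by (intro sum.group[symmetric] finite_k_subsets) simp_all
  also have "\<dots> = (\<Sum>l=0..k. real (card {R' \<in> k_subsets n k. card (R \<inter> R') = l}) * u l)"
    by (intro sum.cong refl) simp
  also have "\<dots> \<le> (\<Sum>l=0..k. real ((k choose l) * ((n - k) choose (k - l))) * u l)"
    by (intro sum_mono mult_right_mono u) (simp only: of_nat_le_iff card_k_subsets_meeting_le[OF R])
  finally show ?thesis .
qed

lemma sum_block_pairs_by_overlap_le:
  fixes n k :: nat and h :: "nat \<Rightarrow> nat \<Rightarrow> real"
  assumes h: "\<And>l r. h l r \<ge> 0"
  defines "K \<equiv> k_subsets n k" and "a \<equiv> \<lambda>l. real ((k choose l) * ((n - k) choose (k - l)))"
  shows "(\<Sum>p\<in>K \<times> K. \<Sum>p'\<in>K \<times> K. h (card (fst p \<inter> fst p')) (card (snd p \<inter> snd p'))) \<le>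
    (\<Sum>l=0..k. \<Sum>r=0..k. (real (n choose k) * a l) * (real (n choose k) * a r) * h l r)"
proof -
  have "(\<Sum>p\<in>K \<times> K. \<Sum>p'\<in>K \<times> K. h (card (fst p \<inter> fst p')) (card (snd p \<inter> snd p')))
      = (\<Sum>R\<in>K. \<Sum>R'\<in>K. \<Sum>C\<in>K. \<Sum>C'\<in>K. h (card (R \<inter> R')) (card (C \<inter> C')))"
    by (simp only: sum.cartesian_product' fst_conv snd_conv) (intro sum.cong[OF refl] sum.swap)
  also have "\<dots> \<le> (\<Sum>R\<in>K. \<Sum>R'\<in>K. \<Sum>C\<in>K. \<Sum>r=0..k. a r * h (card (R \<inter> R')) r)"
    unfolding K_def a_def by (intro sum_mono sum_k_subsets_by_intersection_le h)
  also have "\<dots> = (\<Sum>R\<in>K. \<Sum>R'\<in>K. real (n choose k) * (\<Sum>r=0..k. a r * h (card (R \<inter> R')) r))"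
    by (simp add: K_def card_k_subsets)
  also have "\<dots> \<le> (\<Sum>R\<in>K. \<Sum>l=0..k. a l * (real (n choose k) * (\<Sum>r=0..k. a r * h l r)))"
    unfolding K_def a_def
    by (intro sum_mono sum_k_subsets_by_intersection_le mult_nonneg_nonneg sum_nonneg h) auto
  also have "\<dots> = (\<Sum>l=0..k. \<Sum>r=0..k. (real (n choose k) * a l) * (real (n choose k) * a r) * h l r)"
    by (simp add: K_def card_k_subsets sum_distrib_left mult_ac)
  finally show ?thesis .
qed

lemma sum_add_sum_eq_weighted_sum_Un:
  fixes w :: "'a \<Rightarrow> real"
  assumes fin: "finite E" "finite E'"
  shows "(\<Sum>e\<in>E. w e) + (\<Sum>e\<in>E'. w e) = (\<Sum>e\<in>E \<union> E'. (if e \<in> E \<inter> E' then 2 else 1) * w e)"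
proof -
  have "(\<Sum>e\<in>E \<union> E'. (if e \<in> E \<inter> E' then 2 else 1) * w e)
      = (\<Sum>e\<in>E \<union> E'. w e + (if e \<in> E \<inter> E' then w e else 0))"
    by (intro sum.cong refl) auto
  also have "\<dots> = (\<Sum>e\<in>E \<union> E'. w e) + (\<Sum>e\<in>E \<inter> E'. w e)"
    using fin by (simp add: sum.distrib sum.If_cases Collect_conj_eq Int_assoc[symmetric])
  finally show ?thesis using fin by (simp add: sum.union_inter)
qed

lemma sum_squared_overlap_weights:
  assumes fin: "finite E" "finite E'"
  shows "(\<Sum>e\<in>E \<union> E'. (if e \<in> E \<inter> E' then 2 else 1 :: real)\<^sup>2)
    = real (card E) + real (card E') + 2 * real (card (E \<inter> E'))"
proof -
  have "(\<Sum>e\<in>E \<union> E'. (if e \<in> E \<inter> E' then 2 else 1 :: real)\<^sup>2)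
      = (\<Sum>e\<in>E \<union> E'. 1 + (if e \<in> E \<inter> E' then 3 else 0))"
    by (intro sum.cong refl) auto
  also have "\<dots> = real (card (E \<union> E')) + 3 * real (card (E \<inter> E'))"
    using fin by (simp add: sum.distrib sum.If_cases Collect_conj_eq Int_assoc[symmetric])
  finally show ?thesis using card_Un_Int[OF fin] by simp
qed

locale gaussian_matrix =
  fixes n :: nat
  assumes n_pos: "n \<ge> 1"
begin

abbreviation entries :: "(nat \<times> nat) set" where
  "entries \<equiv> {..<n} \<times> {..<n}"

sublocale prob_space "gauss_matrix n"
  unfolding gauss_matrix_def by (intro prob_space_PiM prob_space_std_normal)

lemma measurable_entry: "e \<in> entries \<Longrightarrow> (\<lambda>w. w e) \<in> borel_measurable (gauss_matrix n)"
proof -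
  assume "e \<in> entries"
  then have "(\<lambda>w. w e) \<in> Pi\<^sub>M entries (\<lambda>_. std_normal) \<rightarrow>\<^sub>M std_normal"
    by (rule measurable_component_singleton)
  moreover have "Pi\<^sub>M entries (\<lambda>_. std_normal) \<rightarrow>\<^sub>M std_normal = Pi\<^sub>M entries (\<lambda>_. std_normal) \<rightarrow>\<^sub>M borel"
    by (rule measurable_cong_sets) auto
  ultimately show ?thesis unfolding gauss_matrix_def by simp
qed

lemma distr_entry: "e \<in> entries \<Longrightarrow> distr (gauss_matrix n) std_normal (\<lambda>w. w e) = std_normal"
  unfolding gauss_matrix_def by (rule distr_PiM_component) (auto intro: prob_space_std_normal)

lemma distributed_entry: "e \<in> entries \<Longrightarrow> distributed (gauss_matrix n) lborel (\<lambda>w. w e) std_normal_density"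
proof -
  assume e: "e \<in> entries"
  have "distr (gauss_matrix n) lborel (\<lambda>w. w e) = distr (gauss_matrix n) std_normal (\<lambda>w. w e)"
    by (rule distr_cong) auto
  then show ?thesis using distr_entry[OF e] measurable_entry[OF e]
    by (simp add: distributed_def)
qed

lemma indep_entries: "indep_vars (\<lambda>_. borel) (\<lambda>e w. w e) entries"
proof (subst indep_vars_iff_distr_eq_PiM')
  have "(0, 0) \<in> entries" using n_pos by auto
  then show "entries \<noteq> {}" by blast
  show "\<And>e. e \<in> entries \<Longrightarrow> random_variable borel (\<lambda>w. w e)" by (rule measurable_entry)
  have "distr (gauss_matrix n) (Pi\<^sub>M entries (\<lambda>_. borel)) (\<lambda>x. \<lambda>e\<in>entries. x e)
      = distr (gauss_matrix n) (gauss_matrix n) (\<lambda>x. x)"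
    by (rule distr_cong) (auto simp: gauss_matrix_def space_PiM intro!: sets_PiM_cong)
  also have "\<dots> = Pi\<^sub>M entries (\<lambda>e. distr (gauss_matrix n) borel (\<lambda>w. w e))"
    unfolding distr_id gauss_matrix_def
  proof (rule PiM_cong)
    fix e assume e: "e \<in> entries"
    have "distr (Pi\<^sub>M entries (\<lambda>_. std_normal)) borel (\<lambda>w. w e)
        = distr (gauss_matrix n) std_normal (\<lambda>w. w e)"
      by (rule distr_cong) (auto simp: gauss_matrix_def)
    then show "std_normal = distr (Pi\<^sub>M entries (\<lambda>_. std_normal)) borel (\<lambda>w. w e)"
      using distr_entry[OF e] by simp
  qed simp
  finally show "distr (gauss_matrix n) (Pi\<^sub>M entries (\<lambda>_. borel)) (\<lambda>x. \<lambda>e\<in>entries. x e)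
      = Pi\<^sub>M entries (\<lambda>e. distr (gauss_matrix n) borel (\<lambda>w. w e))" .
qed

lemma distributed_weighted_sum:
  assumes E: "finite E" "E \<noteq> {}" "E \<subseteq> entries" and c: "\<And>e. e \<in> E \<Longrightarrow> c e > 0"
  shows "distributed (gauss_matrix n) lborel (\<lambda>w. \<Sum>e\<in>E. c e * w e)
    (normal_density 0 (sqrt (\<Sum>e\<in>E. (c e)\<^sup>2)))"
proof -
  have indep: "indep_vars (\<lambda>_. borel) (\<lambda>e w. c e * w e) E"
    using indep_vars_compose2[OF indep_vars_subset[OF indep_entries E(3)], of "\<lambda>e x. c e * x" "\<lambda>_. borel"]
    by simp
  have "distributed (gauss_matrix n) lborel (\<lambda>w. c e * w e) (normal_density 0 (c e))"
    if e: "e \<in> E" for e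
    using normal_density_affine[OF distributed_entry[of e], of "c e" 0] e E(3) c[OF e] by auto
  from sum_indep_normal[OF E(1,2) indep c this] show ?thesis by simp
qed

lemma prob_weighted_sum_ge:
  assumes E: "finite E" "E \<noteq> {}" "E \<subseteq> entries" and c: "\<And>e. e \<in> E \<Longrightarrow> c e > 0"
  shows "prob {w \<in> space (gauss_matrix n). t \<le> (\<Sum>e\<in>E. c e * w e)}
    = measure std_normal {t / sqrt (\<Sum>e\<in>E. (c e)\<^sup>2)..}"
proof -
  define \<sigma> where "\<sigma> = sqrt (\<Sum>e\<in>E. (c e)\<^sup>2)"
  let ?Z = "\<lambda>w. ((\<Sum>e\<in>E. c e * w e) - 0) / \<sigma>"
  have "(c e)\<^sup>2 > 0" if "e \<in> E" for e using c[OF that] by simp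
  then have "\<sigma> > 0" unfolding \<sigma>_def using E by (intro real_sqrt_gt_zero sum_pos)
  moreover have "distributed (gauss_matrix n) lborel (\<lambda>w. \<Sum>e\<in>E. c e * w e) (normal_density 0 \<sigma>)"
    unfolding \<sigma>_def using E c by (rule distributed_weighted_sum)
  ultimately have D: "distributed (gauss_matrix n) lborel ?Z std_normal_density"
    using normal_standard_normal_convert[of \<sigma> "\<lambda>w. \<Sum>e\<in>E. c e * w e" 0] by blast
  have "measure std_normal {t / \<sigma>..} = measure (distr (gauss_matrix n) lborel ?Z) {t/\<sigma>..}"
    using D by (simp add: distributed_def)
  also have "\<dots> = prob (?Z -` {t/\<sigma>..} \<inter> space (gauss_matrix n))"
    using D by (intro measure_distr) (auto simp: distributed_def)
  also have "?Z -` {t/\<sigma>..} \<inter> space (gauss_matrix n) = {w \<in> space (gauss_matrix n). t \<le> (\<Sum>e\<in>E. c e * w e)}"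
    using \<open>\<sigma> > 0\<close> by (auto simp: divide_le_cancel)
  finally show ?thesis unfolding \<sigma>_def by simp
qed

lemma prob_weighted_sums_ge_disjoint:
  assumes E: "finite E" "E \<subseteq> entries" and E': "finite E'" "E' \<subseteq> entries" and disj: "E \<inter> E' = {}"
  shows "prob {w \<in> space (gauss_matrix n). t \<le> (\<Sum>e\<in>E. c e * w e) \<and> t \<le> (\<Sum>e\<in>E'. c e * w e)} =
    prob {w \<in> space (gauss_matrix n). t \<le> (\<Sum>e\<in>E. c e * w e)} *
    prob {w \<in> space (gauss_matrix n). t \<le> (\<Sum>e\<in>E'. c e * w e)}"
proof -
  have measurable: "(\<lambda>x. \<Sum>e\<in>E. c e * x e) \<in> borel_measurable (Pi\<^sub>M E (\<lambda>_. borel))"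
    "(\<lambda>x. \<Sum>e\<in>E'. c e * x e) \<in> borel_measurable (Pi\<^sub>M E' (\<lambda>_. borel))"
    by (intro borel_measurable_sum borel_measurable_times measurable_component_singleton; simp)+
  have "indep_var borel (\<lambda>w. \<Sum>e\<in>E. c e * w e) borel (\<lambda>w. \<Sum>e\<in>E'. c e * w e)"
    using indep_var_compose[OF indep_var_restrict[OF indep_entries disj E(2) E'(2)] measurable]
    by (simp add: o_def)
  from prob_indep_random_variable[OF this, of "{t..}" "{t..}"] show ?thesis by simp
qed

definition block_event :: "real \<Rightarrow> nat set \<times> nat set \<Rightarrow> (nat \<times> nat \<Rightarrow> real) set" where
  "block_event t p = {w \<in> space (gauss_matrix n). t \<le> (\<Sum>e\<in>fst p \<times> snd p. w e)}"

lemma block_event_in_events: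
  assumes "p \<in> k_subsets n k \<times> k_subsets n k"
  shows "block_event t p \<in> events"
proof -
  have "(\<lambda>w. \<Sum>e\<in>fst p \<times> snd p. w e) \<in> borel_measurable (gauss_matrix n)"
    using assms by (intro borel_measurable_sum measurable_entry) (auto dest!: k_subsetsD)
  from measurable_sets[OF this, of "{t..}"] show ?thesis
    by (simp add: block_event_def vimage_def Int_def conj_commute)
qed

lemma prob_block_event:
  assumes k: "k \<ge> 1" and p: "p \<in> k_subsets n k \<times> k_subsets n k"
  shows "prob (block_event t p) = measure std_normal {t / real k..}"
proof -
  obtain R C where p_eq: "p = (R, C)" by (cases p)
  have R: "R \<subseteq> {..<n}" "card R = k" "finite R" and C: "C \<subseteq> {..<n}" "card C = k" "finite C"
    using p p_eq by (auto dest!: k_subsetsD)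
  have "prob {w \<in> space (gauss_matrix n). t \<le> (\<Sum>e\<in>R \<times> C. (\<lambda>_. 1::real) e * w e)} =
      measure std_normal {t / sqrt (\<Sum>e\<in>R \<times> C. ((\<lambda>_. 1::real) e)\<^sup>2)..}"
    by (rule prob_weighted_sum_ge) (use R C k in auto)
  moreover have "sqrt (\<Sum>e\<in>R \<times> C. ((\<lambda>_. 1::real) e)\<^sup>2) = real k"
    using R C by (simp add: card_cartesian_product power2_eq_square[symmetric])
  ultimately show ?thesis by (simp add: block_event_def p_eq)
qed

lemma prob_block_events_independent:
  assumes p: "p \<in> k_subsets n k \<times> k_subsets n k" and p': "p' \<in> k_subsets n k \<times> k_subsets n k"
    and disjoint: "fst p \<inter> fst p' = {} \<or> snd p \<inter> snd p' = {}"
  shows "prob (block_event t p \<inter> block_event t p') = prob (block_event t p) * prob (block_event t p')"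
proof -
  let ?E = "fst p \<times> snd p" and ?E' = "fst p' \<times> snd p'"
  have "finite ?E" "?E \<subseteq> entries" "finite ?E'" "?E' \<subseteq> entries"
    using p p' by (auto dest!: k_subsetsD)
  moreover have "?E \<inter> ?E' = {}" using disjoint by auto
  ultimately have "prob {w \<in> space (gauss_matrix n).
        t \<le> (\<Sum>e\<in>?E. (\<lambda>_. 1::real) e * w e) \<and> t \<le> (\<Sum>e\<in>?E'. (\<lambda>_. 1::real) e * w e)} =
      prob {w \<in> space (gauss_matrix n). t \<le> (\<Sum>e\<in>?E. (\<lambda>_. 1::real) e * w e)} *
      prob {w \<in> space (gauss_matrix n). t \<le> (\<Sum>e\<in>?E'. (\<lambda>_. 1::real) e * w e)}"
    by (rule prob_weighted_sums_ge_disjoint)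
  moreover have "block_event t p \<inter> block_event t p' = {w \<in> space (gauss_matrix n).
      t \<le> (\<Sum>e\<in>?E. w e) \<and> t \<le> (\<Sum>e\<in>?E'. w e)}"
    by (auto simp: block_event_def)
  ultimately show ?thesis by (simp add: block_event_def)
qed

text \<open>On the joint event the sum of the two block sums, which counts the shared entries
  twice, is at least \<open>2t\<close>.\<close>

lemma prob_block_events_overlap_le:
  assumes k: "k \<ge> 1"
    and p: "p \<in> k_subsets n k \<times> k_subsets n k" and p': "p' \<in> k_subsets n k \<times> k_subsets n k"
  shows "prob (block_event t p \<inter> block_event t p') \<le> measure std_normal
    {2 * t / sqrt (2 * real k ^ 2 + 2 * real (card (fst p \<inter> fst p')) * real (card (snd p \<inter> snd p')))..}"
proof -
  obtain R C R' C' where p_eq: "p = (R, C)" and p'_eq: "p' = (R', C')" by (cases p, cases p')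
  have R: "R \<subseteq> {..<n}" "finite R" "card R = k" and C: "C \<subseteq> {..<n}" "finite C" "card C = k"
    and R': "R' \<subseteq> {..<n}" "finite R'" "card R' = k" and C': "C' \<subseteq> {..<n}" "finite C'" "card C' = k"
    using p p' p_eq p'_eq by (auto dest!: k_subsetsD)
  define E where "E = R \<times> C"
  define E' where "E' = R' \<times> C'"
  define c where "c = (\<lambda>e. if e \<in> E \<inter> E' then 2 else (1::real))"
  define J where "J = {w \<in> space (gauss_matrix n). 2 * t \<le> (\<Sum>e\<in>E \<union> E'. c e * w e)}"
  have fin: "finite E" "finite E'" and sub: "E \<union> E' \<subseteq> entries"
    using R C R' C' by (auto simp: E_def E'_def)
  have "(\<lambda>w. \<Sum>e\<in>E \<union> E'. c e * w e) \<in> borel_measurable (gauss_matrix n)"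
    using sub by (intro borel_measurable_sum borel_measurable_times borel_measurable_const measurable_entry) auto
  from measurable_sets[OF this, of "{2*t..}"] have "J \<in> events"
    by (simp add: J_def vimage_def Int_def conj_commute)
  moreover have "block_event t p \<inter> block_event t p' \<subseteq> J"
  proof
    fix w assume "w \<in> block_event t p \<inter> block_event t p'"
    then have "w \<in> space (gauss_matrix n)" "t \<le> (\<Sum>e\<in>E. w e)" "t \<le> (\<Sum>e\<in>E'. w e)"
      by (auto simp: block_event_def p_eq p'_eq E_def E'_def)
    then show "w \<in> J"
      using sum_add_sum_eq_weighted_sum_Un[OF fin, of w] by (simp add: J_def c_def)
  qed
  ultimately have "prob (block_event t p \<inter> block_event t p') \<le> prob J"
    by (intro finite_measure_mono)
  also have "\<dots> = measure std_normal {2 * t / sqrt (\<Sum>e\<in>E \<union> E'. (c e)\<^sup>2)..}"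
    unfolding J_def using fin sub R C k by (intro prob_weighted_sum_ge) (auto simp: c_def E_def)
  also have "(\<Sum>e\<in>E \<union> E'. (c e)\<^sup>2) = 2 * real k ^ 2 + 2 * real (card (R \<inter> R')) * real (card (C \<inter> C'))"
  proof -
    have "E \<inter> E' = (R \<inter> R') \<times> (C \<inter> C')" by (auto simp: E_def E'_def)
    then show ?thesis
      using sum_squared_overlap_weights[OF fin] R C R' C'
      by (simp add: c_def E_def E'_def card_cartesian_product power2_eq_square)
  qed
  finally show ?thesis using p_eq p'_eq by simp
qed

lemma Gamma_count_eq_sum_indicators:
  assumes k: "k \<ge> 1" and w: "w \<in> space (gauss_matrix n)"
  shows "Gamma_count \<tau> n k w
    = (\<Sum>p\<in>k_subsets n k \<times> k_subsets n k. indicator (block_event (\<tau> * real k ^ 2) p) w)"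
proof -
  have "{(R, C). R \<subseteq> {..<n} \<and> card R = k \<and> C \<subseteq> {..<n} \<and> card C = k \<and> avg_sub w R C \<ge> \<tau>}
      = {p \<in> k_subsets n k \<times> k_subsets n k. \<tau> \<le> avg_sub w (fst p) (snd p)}"
    by (auto simp: k_subsets_def)
  moreover have "(\<tau> \<le> avg_sub w (fst p) (snd p)) = (w \<in> block_event (\<tau> * real k ^ 2) p)"
    if "p \<in> k_subsets n k \<times> k_subsets n k" for p
  proof -
    have "card (fst p) = k" "card (snd p) = k" using that by (auto dest!: k_subsetsD)
    then have "avg_sub w (fst p) (snd p) = (\<Sum>e\<in>fst p \<times> snd p. w e) / (real k)\<^sup>2"
      unfolding avg_sub_def by (simp add: sum.cartesian_product power2_eq_square)
    then show ?thesis using k w by (simp add: le_divide_eq block_event_def)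
  qed
  ultimately have "{(R, C). R \<subseteq> {..<n} \<and> card R = k \<and> C \<subseteq> {..<n} \<and> card C = k \<and> avg_sub w R C \<ge> \<tau>}
      = k_subsets n k \<times> k_subsets n k \<inter> {p. w \<in> block_event (\<tau> * real k ^ 2) p}"
    by auto
  then show ?thesis
    unfolding Gamma_count_def by (simp add: indicator_def finite_k_subsets)
qed

lemma expect_Gamma_eq:
  assumes k: "k \<ge> 1"
  shows "expect_Gamma \<tau> n k = (real (n choose k))\<^sup>2 * measure std_normal {\<tau> * real k..}"
proof -
  let ?K = "k_subsets n k"
  have "expect_Gamma \<tau> n k = (\<integral>w. (\<Sum>p\<in>?K \<times> ?K. indicator (block_event (\<tau> * real k ^ 2) p) w) \<partial>gauss_matrix n)"
    unfolding expect_Gamma_def by (intro Bochner_Integration.integral_cong refl Gamma_count_eq_sum_indicators k)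
  also have "\<dots> = (\<Sum>p\<in>?K \<times> ?K. \<integral>w. indicator (block_event (\<tau> * real k ^ 2) p) w \<partial>gauss_matrix n)"
    by (rule Bochner_Integration.integral_sum)
      (auto intro!: integrable_real_indicator block_event_in_events simp: less_top[symmetric])
  also have "\<dots> = (\<Sum>p\<in>?K \<times> ?K. prob (block_event (\<tau> * real k ^ 2) p))"
    by (intro sum.cong refl) (simp add: block_event_def Int_absorb2)
  also have "\<dots> = (\<Sum>p\<in>?K \<times> ?K. measure std_normal {\<tau> * real k..})"
    using k by (intro sum.cong refl) (simp add: prob_block_event power2_eq_square)
  finally show ?thesis
    by (simp add: card_cartesian_product card_k_subsets power2_eq_square)
qed

lemma var_Gamma_eq:
  assumes k: "k \<ge> 1"
  shows "var_Gamma \<tau> n k = (\<Sum>p\<in>k_subsets n k \<times> k_subsets n k. \<Sum>p'\<in>k_subsets n k \<times> k_subsets n k.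
      prob (block_event (\<tau> * real k ^ 2) p \<inter> block_event (\<tau> * real k ^ 2) p')
      - (measure std_normal {\<tau> * real k..})\<^sup>2)"
proof -
  let ?P = "k_subsets n k \<times> k_subsets n k"
  have "var_Gamma \<tau> n k = (\<integral>w. ((\<Sum>p\<in>?P. indicator (block_event (\<tau> * real k ^ 2) p) w)
      - real (card ?P) * measure std_normal {\<tau> * real k..})\<^sup>2 \<partial>gauss_matrix n)"
    unfolding var_Gamma_def expect_Gamma_eq[OF k]
    by (intro Bochner_Integration.integral_cong refl)
      (simp add: Gamma_count_eq_sum_indicators[OF k] card_cartesian_product card_k_subsets power2_eq_square)
  also have "\<dots> = (\<Sum>p\<in>?P. \<Sum>p'\<in>?P. prob (block_event (\<tau> * real k ^ 2) p \<inter> block_event (\<tau> * real k ^ 2) p')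
      - (measure std_normal {\<tau> * real k..})\<^sup>2)"
    using k by (intro variance_sum_indicators)
      (auto simp: finite_k_subsets block_event_in_events prob_block_event power2_eq_square)
  finally show ?thesis .
qed

lemma var_Gamma_le:
  assumes k: "k \<ge> 1"
  shows "var_Gamma \<tau> n k \<le> (\<Sum>l=1..k. \<Sum>r=1..k.
    (real (n choose k) * real ((k choose l) * ((n - k) choose (k - l)))) *
    (real (n choose k) * real ((k choose r) * ((n - k) choose (k - r)))) *
    measure std_normal {2 * (\<tau> * real k ^ 2) / sqrt (2 * real k ^ 2 + 2 * real l * real r)..})"
proof -
  let ?P = "k_subsets n k \<times> k_subsets n k"
  let ?A = "block_event (\<tau> * real k ^ 2)"
  let ?q = "measure std_normal {\<tau> * real k..}"
  let ?w = "\<lambda>l r. (real (n choose k) * real ((k choose l) * ((n - k) choose (k - l)))) *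
    (real (n choose k) * real ((k choose r) * ((n - k) choose (k - r))))"
  define h where "h = (\<lambda>l r. if l = 0 \<or> r = 0 then 0
    else measure std_normal {2 * (\<tau> * real k ^ 2) / sqrt (2 * real k ^ 2 + 2 * real l * real r)..})"
  have covariance_le: "prob (?A p \<inter> ?A p') - ?q\<^sup>2 \<le> h (card (fst p \<inter> fst p')) (card (snd p \<inter> snd p'))"
    if p: "p \<in> ?P" and p': "p' \<in> ?P" for p p'
  proof (cases "fst p \<inter> fst p' = {} \<or> snd p \<inter> snd p' = {}")
    case True
    then have "prob (?A p \<inter> ?A p') = ?q\<^sup>2"
      using p p' k by (simp add: prob_block_events_independent prob_block_event power2_eq_square)
    then show ?thesis by (simp add: h_def)
  next
    case False
    have "finite (fst p \<inter> fst p')" "finite (snd p \<inter> snd p')"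
      using p p' by (auto dest!: k_subsetsD)
    with False show ?thesis
      using prob_block_events_overlap_le[OF k p p', of "\<tau> * real k ^ 2"]
      by (simp add: h_def) (smt (verit) zero_le_power2)
  qed
  have "var_Gamma \<tau> n k = (\<Sum>p\<in>?P. \<Sum>p'\<in>?P. prob (?A p \<inter> ?A p') - ?q\<^sup>2)"
    by (rule var_Gamma_eq[OF k])
  also have "\<dots> \<le> (\<Sum>p\<in>?P. \<Sum>p'\<in>?P. h (card (fst p \<inter> fst p')) (card (snd p \<inter> snd p')))"
    by (intro sum_mono covariance_le)
  also have "\<dots> \<le> (\<Sum>l=0..k. \<Sum>r=0..k. ?w l r * h l r)"
    by (rule sum_block_pairs_by_overlap_le) (simp add: h_def)
  also have "\<dots> = (\<Sum>l=1..k. \<Sum>r=1..k. ?w l r * h l r)"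
    by (simp add: sum.atLeast_Suc_atMost[of 0 k] h_def)
  also have "\<dots> = (\<Sum>l=1..k. \<Sum>r=1..k. ?w l r *
      measure std_normal {2 * (\<tau> * real k ^ 2) / sqrt (2 * real k ^ 2 + 2 * real l * real r)..})"
    by (intro sum.cong refl) (simp add: h_def)
  finally show ?thesis .
qed

lemma Gamma_variance_ratio_le:
  assumes \<tau>: "\<tau> > 0" and \<tau>k: "\<tau> * real k \<ge> 1" and kn: "k \<le> n"
  shows "var_Gamma \<tau> n k / (expect_Gamma \<tau> n k)\<^sup>2 \<le>
    2 * pi * exp 3 * \<tau>\<^sup>2 * real k ^ 4 * (\<Sum>l=1..k. \<Sum>r=1..k.
      (real (k choose l) * real ((n - k) choose (k - l)) / real (n choose k)) *
      (real (k choose r) * real ((n - k) choose (k - r)) / real (n choose k)) *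
      exp (real r * real l * \<tau>\<^sup>2 / 2 *
           (1 + (real k ^ 2 - real r * real l) / (real k ^ 2 + real r * real l))))"
proof -
  define B where "B = real (n choose k)"
  define q where "q = measure std_normal {\<tau> * real k..}"
  define a where "a = (\<lambda>l. real ((k choose l) * ((n - k) choose (k - l))))"
  define h where "h = (\<lambda>l r. measure std_normal
    {2 * (\<tau> * real k ^ 2) / sqrt (2 * real k ^ 2 + 2 * real l * real r)..})"
  define E where "E = (\<lambda>l r. exp (real r * real l * \<tau>\<^sup>2 / 2 *
    (1 + (real k ^ 2 - real r * real l) / (real k ^ 2 + real r * real l))))"
  have k: "k \<ge> 1" using \<tau>k by (cases k) auto
  have B: "B > 0" unfolding B_def using kn by simp
  have "exp (-3/2) / (sqrt (2*pi) * (\<tau> * real k)) * exp (-(\<tau> * real k)\<^sup>2/2) > 0"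
    using \<tau>k by simp
  then have q: "q > 0" using std_normal_tail_ge[OF \<tau>k] unfolding q_def by linarith
  have "var_Gamma \<tau> n k \<le> (\<Sum>l=1..k. \<Sum>r=1..k. (B * a l) * (B * a r) * h l r)"
    unfolding B_def a_def h_def by (rule var_Gamma_le[OF k])
  moreover have "expect_Gamma \<tau> n k = B\<^sup>2 * q"
    unfolding B_def q_def by (rule expect_Gamma_eq[OF k])
  ultimately have "var_Gamma \<tau> n k / (expect_Gamma \<tau> n k)\<^sup>2
      \<le> (\<Sum>l=1..k. \<Sum>r=1..k. (B * a l) * (B * a r) * h l r) / (B\<^sup>2 * q)\<^sup>2"
    by (simp add: divide_right_mono)
  also have "\<dots> = (\<Sum>l=1..k. \<Sum>r=1..k. (a l / B) * (a r / B) * (h l r / q\<^sup>2))"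
    unfolding sum_divide_distrib using B q
    by (intro sum.cong refl) (simp add: field_simps power2_eq_square)
  also have "\<dots> \<le> (\<Sum>l=1..k. \<Sum>r=1..k. (a l / B) * (a r / B) * (2 * pi * exp 3 * \<tau>\<^sup>2 * real k ^ 4 * E l r))"
    using overlap_tail_ratio_le[OF \<tau> \<tau>k] B
    unfolding h_def q_def E_def a_def by (intro sum_mono mult_left_mono) auto
  also have "\<dots> = 2 * pi * exp 3 * \<tau>\<^sup>2 * real k ^ 4 * (\<Sum>l=1..k. \<Sum>r=1..k. (a l / B) * (a r / B) * E l r)"
    by (simp add: sum_distrib_left mult_ac)
  finally show ?thesis
    unfolding a_def B_def E_def by (simp add: mult_ac)
qed

end

theorem lemma3:
  fixes \<tau> :: real
  assumes "\<tau> > 0"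
  shows "\<exists>n0 k0 :: nat. n0 \<ge> 1 \<and> k0 \<ge> 1 \<and> (\<exists>C::real. C > 0 \<and>
    (\<forall>n k. n \<ge> n0 \<and> k \<ge> k0 \<and> k \<le> n \<longrightarrow>
      var_Gamma \<tau> n k / (expect_Gamma \<tau> n k)\<^sup>2 \<le>
        C * real k ^ 4 * (\<Sum>l=1..k. \<Sum>r=1..k.
          (real (k choose l) * real ((n - k) choose (k - l)) / real (n choose k)) *
          (real (k choose r) * real ((n - k) choose (k - r)) / real (n choose k)) *
          exp (real r * real l * \<tau>\<^sup>2 / 2 *
               (1 + (real k ^ 2 - real r * real l) / (real k ^ 2 + real r * real l))))))"
proof -
  define k0 where "k0 = max 1 (nat \<lceil>1 / \<tau>\<rceil>)"
  have "\<tau> * real k \<ge> 1" if "k \<ge> k0" for k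
  proof -
    have "real k \<ge> 1 / \<tau>" using that unfolding k0_def by linarith
    with assms show ?thesis by (simp add: field_simps)
  qed
  moreover have "gaussian_matrix n" if "n \<ge> 1" for n
    using that by unfold_locales
  ultimately show ?thesis
    using assms gaussian_matrix.Gamma_variance_ratio_le
    by (intro exI[of _ 1] exI[of _ k0] conjI exI[of _ "2 * pi * exp 3 * \<tau>\<^sup>2"]) (auto simp: k0_def)
qed

end
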